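(* Define $F(0)=1$, $F(1)=2$ and $F(n)=F(n-1)+F(n-2)$ for $n\ge 2$ (so $\sum_{n\ge0}F(n)q^n=\frac{1+q}{1-q-q^2}$). For a word $w=w_1\cdots w_n$ over $\{1,2,3\}$ let $s(w)=|\{i : 1\le i\le n-2,\ w_{i+2}-w_i=2\}|$. Then for every $n\ge 0$, the number of words $w\in\{1,2,3\}^{2n}$ with $s(w)=0$ is $F(2n)^2$, and the number of words $w\in\{1,2,3\}^{2n+1}$ with $s(w)=0$ is $F(2n)F(2n+2)$.
   Context: The condition $s(w)=0$ means $w$ avoids the place-difference-value pattern $(12,(\mathbb{P},\{2\},\mathbb{P}),\{(1,2,\{2\})\},(\mathbb{P},\mathbb{P}))$, i.e. there is no $i$ with $w_{i+2}=w_i+2$. *)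

theory Defs
  imports Main
begin

fun F :: "nat \<Rightarrow> nat" where
  "F 0 = 1"
| "F (Suc 0) = 2"
| "F (Suc (Suc n)) = F (Suc n) + F n"

text \<open>s(w): number of positions i (1-based, 1 <= i <= n-2) with w_(i+2) - w_i = 2.
  Here lists are 0-indexed, so i ranges over i + 2 < length w.\<close>
definition s :: "nat list \<Rightarrow> nat" where
  "s w = card {i. i + 2 < length w \<and> int (w ! (i + 2)) - int (w ! i) = 2}"

definition words :: "nat \<Rightarrow> nat list set" where
  "words n = {w. length w = n \<and> set w \<subseteq> {1, 2, 3}}"

end

theory Submission
  imports Defs
begin

text \<open>The condition \<open>w\<^sub>i\<^sub>+\<^sub>2 = w\<^sub>i + 2\<close> only links letters of equal parity of position, so a
  word with \<open>s w = 0\<close> is an interleaving of two independent sequences over \<open>{1,2,3}\<close> in which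
  no 1 is immediately followed by a 3. Such sequences of length \<open>k\<close> are counted by a transfer
  recursion whose solution is \<open>F (2k)\<close>; hence the counts \<open>F (2n)\<^sup>2\<close> and \<open>F (2n) F (2n+2)\<close>.\<close>

fun rise2_free :: "nat list \<Rightarrow> bool" where
  "rise2_free (a # b # c # w) = (int c - int a \<noteq> 2 \<and> rise2_free (b # c # w))"
| "rise2_free _ = True"

lemma all_nat_split: "(\<forall>i. P i) \<longleftrightarrow> P 0 \<and> (\<forall>i. P (Suc i))"
  by (metis not0_implies_Suc)

lemma s_eq_0_iff_rise2_free: "s w = 0 \<longleftrightarrow> rise2_free w"
proof -
  have "finite {i. i + 2 < length w \<and> int (w ! (i + 2)) - int (w ! i) = 2}"
    by (rule finite_subset[of _ "{..<length w}"]) auto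
  then have "s w = 0 \<longleftrightarrow> (\<forall>i. i + 2 < length w \<longrightarrow> int (w ! (i + 2)) - int (w ! i) \<noteq> 2)"
    unfolding s_def by auto
  also have "\<dots> \<longleftrightarrow> rise2_free w"
    by (induction w rule: rise2_free.induct) (subst all_nat_split; simp)+
  finally show ?thesis .
qed

lemma rise2_free_22_Cons_Cons:
  assumes "set w \<subseteq> {1, 2, 3}"
  shows "rise2_free (2 # 2 # w) \<longleftrightarrow> rise2_free w"
  using assms by (cases w rule: rise2_free.cases) auto

definition completions :: "nat \<Rightarrow> nat \<Rightarrow> nat \<Rightarrow> nat list set" where
  "completions m a b = {w. length w = m \<and> set w \<subseteq> {1, 2, 3} \<and> rise2_free (a # b # w)}"

definition successors :: "nat \<Rightarrow> nat set" where
  "successors a = {c \<in> {1, 2, 3}. int c - int a \<noteq> 2}"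

primrec num_walks :: "nat \<Rightarrow> nat \<Rightarrow> nat" where
  "num_walks 0 a = 1"
| "num_walks (Suc k) a = (\<Sum>c\<in>successors a. num_walks k c)"

lemma completions_Suc: "completions (Suc m) a b = (\<Union>c\<in>successors a. (#) c ` completions m b c)"
proof (rule set_eqI)
  fix w
  show "w \<in> completions (Suc m) a b \<longleftrightarrow> w \<in> (\<Union>c\<in>successors a. (#) c ` completions m b c)"
    by (cases w) (auto simp: completions_def successors_def)
qed

lemma finite_completions: "finite (completions m a b)"
proof (rule finite_subset)
  show "completions m a b \<subseteq> {w. set w \<subseteq> {1, 2, 3} \<and> length w = m}"
    by (auto simp: completions_def)
  show "finite {w. set w \<subseteq> {1, 2, 3 :: nat} \<and> length w = m}"
    by (rule finite_lists_length_eq) simp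
qed

text \<open>The two parity classes of positions evolve independently; the roles of \<open>a\<close> and \<open>b\<close>
  swap at every step.\<close>
lemma card_completions: "card (completions m a b) = num_walks ((m + 1) div 2) a * num_walks (m div 2) b"
proof (induction m arbitrary: a b)
  case 0
  have "completions 0 a b = {[]}" by (auto simp: completions_def)
  then show ?case by simp
next
  case (Suc m)
  have "card (completions (Suc m) a b) = (\<Sum>c\<in>successors a. card ((#) c ` completions m b c))"
    unfolding completions_Suc
    by (rule card_UN_disjoint) (auto simp: successors_def finite_completions)
  also have "\<dots> = (\<Sum>c\<in>successors a. card (completions m b c))"
    by (rule sum.cong) (auto simp: card_image)
  also have "\<dots> = (\<Sum>c\<in>successors a. num_walks ((m + 1) div 2) b * num_walks (m div 2) c)"
    using Suc.IH by simp
  also have "\<dots> = num_walks ((m + 1) div 2) b * num_walks (Suc (m div 2)) a"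
    by (simp add: sum_distrib_left)
  finally show ?case by simp
qed

lemma successors_1: "successors (Suc 0) = {1, 2}"
  and successors_2: "successors 2 = {1, 2, 3}"
  and successors_3: "successors 3 = {1, 2, 3}"
  by (auto simp: successors_def)

lemma chains_closed_form:
  "num_walks k 2 = F (2 * k) \<and> num_walks k 3 = F (2 * k) \<and> num_walks k 1 + F (2 * k) = F (2 * k + 1)"
proof (induction k)
  case 0
  then show ?case by simp
next
  case (Suc k)
  have "2 * Suc k = Suc (Suc (2 * k))" by simp
  then show ?case
    using Suc by (simp add: successors_1 successors_2 successors_3)
qed

lemma card_s_eq_0: "card {w \<in> words m. s w = 0} = F (2 * ((m + 1) div 2)) * F (2 * (m div 2))"
proof -
  have "{w \<in> words m. s w = 0} = completions m 2 2"
    by (auto simp: words_def completions_def s_eq_0_iff_rise2_free rise2_free_22_Cons_Cons)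
  then show ?thesis
    using card_completions chains_closed_form by simp
qed

theorem mainTheorem5:
  fixes n :: nat
  shows "card {w \<in> words (2 * n). s w = 0} = F (2 * n) ^ 2
       \<and> card {w \<in> words (2 * n + 1). s w = 0} = F (2 * n) * F (2 * n + 2)"
proof
  show "card {w \<in> words (2 * n). s w = 0} = F (2 * n) ^ 2"
    using card_s_eq_0[of "2 * n"] by (simp add: power2_eq_square)
  have "(2 * n + 1 + 1) div 2 = n + 1" and "(2 * n + 1) div 2 = n" by simp_all
  then show "card {w \<in> words (2 * n + 1). s w = 0} = F (2 * n) * F (2 * n + 2)"
    using card_s_eq_0[of "2 * n + 1"] by (simp add: mult.commute)
qed

end
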